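(* Let $n\ge1$, $0<\hat\theta<1$ with $n\hat\theta$ an integer, and $\alpha>0$. Define $\Delta=\tfrac12\log(n+1)-H_n(\hat\theta)$ and suppose $\alpha+\Delta\le n\hat\theta^2(1-\hat\theta)^2/8$. Then there is a solution $\gamma_\alpha>0$ of $-\log P_{\mathrm{PBR},n}\big(\hat\theta\,\big|\,\varphi(\gamma_\alpha,\hat\theta)\big)=\alpha$ satisfying $$\gamma_\alpha\in\sqrt{2(\alpha+\Delta)}\left(1+\frac52\frac{\sqrt{\alpha+\Delta}}{\sqrt{n\hat\theta(1-\hat\theta)}}[-1,1]\right)^{-1/2},$$ i.e. $\sqrt{2(\alpha+\Delta)}(1+\epsilon)^{-1/2}\le\gamma_\alpha\le\sqrt{2(\alpha+\Delta)}(1-\epsilon)^{-1/2}$ with $\epsilon=\frac52\sqrt{\alpha+\Delta}/\sqrt{n\hat\theta(1-\hat\theta)}$.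
   Context: Logarithms are natural. $H_n(t)=-nt\log t-n(1-t)\log(1-t)-\log\binom{n}{nt}-\tfrac12\log(n+1)$. $P_{\mathrm{PBR},n}(t|\varphi)=\varphi^{nt}(1-\varphi)^{n(1-t)}(n+1)\binom{n}{nt}$ if $t\ge\varphi$, and $=t^{nt}(1-t)^{n(1-t)}(n+1)\binom{n}{nt}$ otherwise. With $\hat\sigma=\sqrt{\hat\theta(1-\hat\theta)/n}$, $\varphi(\gamma,\hat\theta)=\hat\theta-\hat\sigma\gamma$. *)

theory Defs
  imports "HOL-Analysis.Analysis"
begin

text \<open>Throughout, t is a real in [0,1] with n*t an integer; the integer n*t is
  represented as nat (floor (n*t)) (exact under that hypothesis).\<close>

definition cnt :: "nat \<Rightarrow> real \<Rightarrow> nat" where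
  "cnt n t = nat \<lfloor>real n * t\<rfloor>"

definition H :: "nat \<Rightarrow> real \<Rightarrow> real" where
  "H n t = - real n * t * ln t - real n * (1 - t) * ln (1 - t)
           - ln (real (n choose cnt n t)) - ln (real n + 1) / 2"

definition P_PBR :: "nat \<Rightarrow> real \<Rightarrow> real \<Rightarrow> real" where
  "P_PBR n t phi =
     (if t \<ge> phi
      then phi ^ cnt n t * (1 - phi) ^ (n - cnt n t) * (real n + 1) * real (n choose cnt n t)
      else t ^ cnt n t * (1 - t) ^ (n - cnt n t) * (real n + 1) * real (n choose cnt n t))"

definition sigma_hat :: "nat \<Rightarrow> real \<Rightarrow> real" where
  "sigma_hat n th = sqrt (th * (1 - th) / real n)"

definition phi :: "nat \<Rightarrow> real \<Rightarrow> real \<Rightarrow> real" where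
  "phi n g th = th - sigma_hat n th * g"

end

theory Submission
  imports Defs
begin

text \<open>
  For \<open>q \<le> \<theta>\<close> the PBR likelihood factors as
  \<open>-log P\<^sub>P\<^sub>B\<^sub>R(\<theta>|q) = n KL(\<theta>\<parallel>q) - \<Delta>\<close>, where \<open>\<Delta> = log P\<^sub>P\<^sub>B\<^sub>R(\<theta>|\<theta>)\<close> is
  \<open>log (n + 1)\<close> plus the log of the binomial weight at the mean \<open>n\<theta>\<close>; since that weight is the
  largest of \<open>n + 1\<close> weights summing to one, \<open>\<Delta> \<ge> 0\<close>.  So \<open>\<gamma>\<^sub>\<alpha>\<close> is a root of
  \<open>n KL(\<theta>\<parallel>\<theta> - \<sigma>\<gamma>) = \<alpha> + \<Delta>\<close>.  Third-order Taylor bounds on the logarithm show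
  \<open>KL(\<theta>\<parallel>\<theta> - u) = (1 \<plusminus> \<epsilon>) u\<^sup>2 / (2\<theta>(1 - \<theta>))\<close> for the relevant \<open>u\<close>; the hypothesis
  \<open>\<alpha> + \<Delta> \<le> n\<theta>\<^sup>2(1 - \<theta>)\<^sup>2/8\<close> keeps \<open>\<epsilon>\<close> small enough for this.  Hence \<open>n KL\<close> lies below
  \<open>\<alpha> + \<Delta>\<close> at the left end \<open>\<gamma> = \<surd>(2(\<alpha> + \<Delta>))(1 + \<epsilon>)\<^sup>-\<^sup>1\<^sup>/\<^sup>2\<close> of the interval and above it at
  the right end, and the intermediate value theorem gives the root.
\<close>

section \<open>Taylor bounds for the logarithm\<close>

lemma minus_ln_one_minus_le_cubic:
  fixes a :: real assumes "0 \<le> a" "a \<le> 1/4"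
  shows "- ln (1 - a) \<le> a + a^2/2 + 4/9 * a^3"
proof -
  let ?h = "\<lambda>x::real. x + x^2/2 + 4/9*x^3 + ln (1 - x)"
  have "?h 0 \<le> ?h a"
  proof (rule DERIV_nonneg_imp_nondecreasing[OF assms(1)])
    fix x :: real assume x: "0 \<le> x" "x \<le> a"
    have deriv: "DERIV ?h x :> 1 + x + 4/3*x^2 - 1/(1-x)"
      using x assms by (auto intro!: derivative_eq_intros simp: field_simps power2_eq_square)
    have eq: "1 + x + 4/3*x^2 - 1/(1-x) = x^2 * (1 - 4*x) / (3*(1-x))"
      using x assms by (simp add: field_simps power2_eq_square)
    have nonneg: "0 \<le> x^2 * (1 - 4*x) / (3*(1-x))"
      using x assms by (intro divide_nonneg_pos mult_nonneg_nonneg) auto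
    show "\<exists>y. DERIV ?h x :> y \<and> y \<ge> 0" using deriv nonneg unfolding eq by blast
  qed
  then show ?thesis by simp
qed

lemma minus_ln_one_minus_ge_cubic:
  fixes a :: real assumes "0 \<le> a" "a < 1"
  shows "a + a^2/2 + a^3/3 \<le> - ln (1 - a)"
proof -
  let ?h = "\<lambda>x::real. - ln (1 - x) - x - x^2/2 - x^3/3"
  have "?h 0 \<le> ?h a"
  proof (rule DERIV_nonneg_imp_nondecreasing[OF assms(1)])
    fix x :: real assume x: "0 \<le> x" "x \<le> a"
    have deriv: "DERIV ?h x :> 1/(1-x) - 1 - x - x^2"
      using x assms by (auto intro!: derivative_eq_intros simp: field_simps power2_eq_square)
    have eq: "1/(1-x) - 1 - x - x^2 = x^3/(1-x)"
      using x assms by (simp add: field_simps power2_eq_square power3_eq_cube)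
    have nonneg: "x^3/(1-x) \<ge> 0" using x assms by (intro divide_nonneg_pos) auto
    show "\<exists>y. DERIV ?h x :> y \<and> y \<ge> 0" using deriv nonneg unfolding eq by blast
  qed
  then show ?thesis by simp
qed

lemma ln_one_plus_le_cubic:
  fixes b :: real assumes "0 \<le> b"
  shows "ln (1 + b) \<le> b - b^2/2 + b^3/3"
proof -
  let ?h = "\<lambda>x::real. x - x^2/2 + x^3/3 - ln (1 + x)"
  have "?h 0 \<le> ?h b"
  proof (rule DERIV_nonneg_imp_nondecreasing[OF assms(1)])
    fix x :: real assume x: "0 \<le> x" "x \<le> b"
    have deriv: "DERIV ?h x :> 1 - x + x^2 - 1/(1+x)"
      using x by (auto intro!: derivative_eq_intros simp: field_simps power2_eq_square)
    have eq: "1 - x + x^2 - 1/(1+x) = x^3/(1+x)"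
      using x by (simp add: field_simps power2_eq_square power3_eq_cube)
    have nonneg: "x^3/(1+x) \<ge> 0" using x by simp
    show "\<exists>y. DERIV ?h x :> y \<and> y \<ge> 0" using deriv nonneg unfolding eq by blast
  qed
  then show ?thesis by simp
qed

lemma ln_one_plus_ge_quadratic:
  fixes b :: real assumes "0 \<le> b"
  shows "b - b^2/2 \<le> ln (1 + b)"
proof -
  let ?h = "\<lambda>x::real. ln (1 + x) - x + x^2/2"
  have "?h 0 \<le> ?h b"
  proof (rule DERIV_nonneg_imp_nondecreasing[OF assms(1)])
    fix x :: real assume x: "0 \<le> x" "x \<le> b"
    have deriv: "DERIV ?h x :> 1/(1+x) - 1 + x"
      using x by (auto intro!: derivative_eq_intros simp: field_simps power2_eq_square)
    have eq: "1/(1+x) - 1 + x = x^2/(1+x)"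
      using x by (simp add: field_simps power2_eq_square)
    have nonneg: "x^2/(1+x) \<ge> 0" using x by simp
    show "\<exists>y. DERIV ?h x :> y \<and> y \<ge> 0" using deriv nonneg unfolding eq by blast
  qed
  then show ?thesis by simp
qed

section \<open>Kullback-Leibler divergence of Bernoulli distributions\<close>

definition bernoulli_kl :: "real \<Rightarrow> real \<Rightarrow> real" where
  "bernoulli_kl p q = p * (ln p - ln q) + (1 - p) * (ln (1 - p) - ln (1 - q))"

lemma bernoulli_kl_shift_eq:
  fixes th u :: real assumes "0 < th" "th < 1" "0 \<le> u" "u < th"
  shows "bernoulli_kl th (th - u) = th * - ln (1 - u/th) + (1 - th) * - ln (1 + u/(1 - th))"
proof -
  have "ln (th - u) = ln (th * (1 - u/th))"
    using assms by (simp add: field_simps)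
  also have "\<dots> = ln th + ln (1 - u/th)"
    using assms by (intro ln_mult_pos) (simp_all add: field_simps)
  finally have ln_q: "ln (th - u) = ln th + ln (1 - u/th)" .
  have "ln (1 - (th - u)) = ln ((1 - th) * (1 + u/(1 - th)))"
    using assms by (simp add: distrib_left)
  also have "\<dots> = ln (1 - th) + ln (1 + u/(1 - th))"
    using assms by (intro ln_mult_pos) (simp_all add: add_pos_nonneg)
  finally have ln_one_minus_q: "ln (1 - (th - u)) = ln (1 - th) + ln (1 + u/(1 - th))" .
  show ?thesis
    unfolding bernoulli_kl_def ln_q ln_one_minus_q by simp
qed

lemma bernoulli_kl_shift_le:
  fixes th u :: real
  assumes "0 < th" "th < 1" "0 \<le> u" "u \<le> th * (1 - th) / 4"
  shows "bernoulli_kl th (th - u) \<le> u^2 / (2 * (th * (1 - th))) + 4/9 * u^3 / th^2"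
proof -
  define q where "q = 1 - th"
  have q: "0 < q" "th + q = 1" "th * q \<le> th"
    using assms unfolding q_def by (auto simp: mult_le_cancel_left1)
  have u_th: "u \<le> th / 4" "u < th"
    using assms q unfolding q_def[symmetric] by linarith+
  have ln_th: "- ln (1 - u/th) \<le> u/th + (u/th)^2/2 + 4/9 * (u/th)^3"
    using assms u_th by (intro minus_ln_one_minus_le_cubic) (simp_all add: field_simps)
  have ln_q: "- ln (1 + u/q) \<le> - (u/q - (u/q)^2/2)"
    using ln_one_plus_ge_quadratic[of "u/q"] q assms by simp
  have "bernoulli_kl th (th - u) \<le> th * (u/th + (u/th)^2/2 + 4/9 * (u/th)^3) + q * - (u/q - (u/q)^2/2)"
    unfolding bernoulli_kl_shift_eq[OF assms(1-3) u_th(2)] q_def[symmetric]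
    using mult_left_mono[OF ln_th] mult_left_mono[OF ln_q] assms q by (intro add_mono) auto
  also have "\<dots> = u^2/(2*th) + u^2/(2*q) + 4/9 * u^3/th^2"
    using assms q by (simp add: field_simps power2_eq_square power3_eq_cube)
  also have "u^2/(2*th) + u^2/(2*q) = u^2 * (th + q) / (2 * (th * q))"
    using assms(1) q(1) by (simp add: field_simps)
  finally show ?thesis
    unfolding q(2) q_def by simp
qed

lemma bernoulli_kl_shift_ge:
  fixes th u :: real
  assumes "0 < th" "th < 1" "0 \<le> u" "u < th * (1 - th)"
  shows "u^2 / (2 * (th * (1 - th))) - u^3 / (3 * (th * (1 - th))^2) \<le> bernoulli_kl th (th - u)"
proof -
  define q where "q = 1 - th"
  have q: "0 < q" "th + q = 1" "th * q \<le> th" "th * q \<le> q"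
    using assms unfolding q_def by (auto simp: mult_le_cancel_left1 mult_le_cancel_right1)
  have u_th: "u < th"
    using assms q unfolding q_def[symmetric] by linarith
  have ln_th: "u/th + (u/th)^2/2 + (u/th)^3/3 \<le> - ln (1 - u/th)"
    using assms u_th by (intro minus_ln_one_minus_ge_cubic) (simp_all add: field_simps)
  have ln_q: "- (u/q - (u/q)^2/2 + (u/q)^3/3) \<le> - ln (1 + u/q)"
    using ln_one_plus_le_cubic[of "u/q"] q assms by simp
  have "u^3 / (3 * q^2) \<le> u^3 / (3 * (th * q)^2)"
    using assms q by (intro divide_left_mono mult_left_mono power_mono) auto
  moreover have "0 \<le> u^3 / (3 * th^2)"
    using assms by simp
  moreover have "u^2/(2*th) + u^2/(2*q) = u^2 * (th + q) / (2 * (th * q))"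
    using assms(1) q(1) by (simp add: field_simps)
  ultimately have "u^2 / (2 * (th * q)) - u^3 / (3 * (th * q)^2)
      \<le> u^2/(2*th) + u^2/(2*q) + u^3/(3*th^2) - u^3/(3*q^2)"
    unfolding q(2) by linarith
  also have "\<dots> = th * (u/th + (u/th)^2/2 + (u/th)^3/3) + q * - (u/q - (u/q)^2/2 + (u/q)^3/3)"
    using assms q by (simp add: field_simps power2_eq_square power3_eq_cube)
  also have "\<dots> \<le> bernoulli_kl th (th - u)"
    unfolding bernoulli_kl_shift_eq[OF assms(1-3) u_th] q_def[symmetric]
    using mult_left_mono[OF ln_th] mult_left_mono[OF ln_q] assms q by (intro add_mono) auto
  finally show ?thesis
    unfolding q_def .
qed

lemma bernoulli_kl_shift_le_quadratic:
  fixes th u e :: real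
  assumes "0 < th" "th < 1" "0 \<le> u" "u \<le> th * (1 - th) / 4" "u \<le> 9/8 * e * (th * (1 - th))"
  shows "bernoulli_kl th (th - u) \<le> (1 + e) * u^2 / (2 * (th * (1 - th)))"
proof -
  define c where "c = th * (1 - th)"
  have c: "0 < c" "c \<le> th"
    using assms unfolding c_def by (auto simp: mult_le_cancel_left1)
  have "4/9 * u^3 / th^2 \<le> 4/9 * u^3 / c^2"
    using assms c by (intro divide_left_mono power_mono) auto
  also have "\<dots> = u^2 * (4/9 * u) / c^2"
    by (simp add: power2_eq_square power3_eq_cube)
  also have "\<dots> \<le> u^2 * (e * c / 2) / c^2"
    using assms unfolding c_def[symmetric] by (intro divide_right_mono mult_left_mono) auto
  also have "\<dots> = e * u^2 / (2 * c)"
    using c by (simp add: power2_eq_square field_simps)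
  moreover have "(1 + e) * u^2 / (2 * c) = u^2 / (2 * c) + e * u^2 / (2 * c)"
    using c by (simp add: field_simps)
  ultimately have "u^2 / (2 * c) + 4/9 * u^3 / th^2 \<le> (1 + e) * u^2 / (2 * c)"
    by linarith
  then show ?thesis
    using bernoulli_kl_shift_le[OF assms(1-4)] unfolding c_def by linarith
qed

lemma bernoulli_kl_shift_ge_quadratic:
  fixes th u e :: real
  assumes "0 < th" "th < 1" "0 \<le> u" "u < th * (1 - th)" "u \<le> 4/5 * e * (th * (1 - th))"
  shows "(1 - e) * u^2 / (2 * (th * (1 - th))) \<le> bernoulli_kl th (th - u)"
proof -
  define c where "c = th * (1 - th)"
  have c: "0 < c"
    using assms unfolding c_def by simp
  have "0 \<le> e * c"
    using assms unfolding c_def[symmetric] by linarith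
  then have e: "0 \<le> e"
    using c by (simp add: zero_le_mult_iff)
  have "u^3 / (3 * c^2) = u^2 * u / (3 * c^2)"
    by (simp add: power2_eq_square power3_eq_cube)
  also have "\<dots> \<le> u^2 * (4/5 * e * c) / (3 * c^2)"
    using assms unfolding c_def[symmetric] by (intro divide_right_mono mult_left_mono) auto
  also have "\<dots> \<le> e * u^2 / (2 * c)"
    using c e by (simp add: power2_eq_square field_simps)
  moreover have "(1 - e) * u^2 / (2 * c) = u^2 / (2 * c) - e * u^2 / (2 * c)"
    using c by (simp add: field_simps)
  ultimately have "(1 - e) * u^2 / (2 * c) \<le> u^2 / (2 * c) - u^3 / (3 * c^2)"
    by linarith
  then show ?thesis
    using bernoulli_kl_shift_ge[OF assms(1-4)] unfolding c_def by linarith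
qed

lemma sq_le_imp_less_half:
  fixes e :: real
  assumes "e^2 \<le> 25/128"
  shows "e < 1/2"
proof (rule ccontr)
  assume "\<not> e < 1/2"
  then have "1/2 * (1/2) \<le> e * e"
    by (intro mult_mono) auto
  then show False
    using assms by (simp add: power2_eq_square)
qed

text \<open>
  The equations \<open>(1 \<plusminus> e) u\<^sup>2 = 8/25 (\<theta>(1 - \<theta>))\<^sup>2 e\<^sup>2\<close> below say that \<open>u = \<sigma>\<gamma>\<^sub>\<plusminus>\<close> for the two
  endpoints \<open>\<gamma>\<^sub>\<plusminus>\<close> of the interval of the theorem, with \<open>e = \<epsilon>\<close>; the bound \<open>e\<^sup>2 \<le> 25/128\<close> is
  what the hypothesis on \<open>\<alpha> + \<Delta>\<close> gives.
\<close>

lemma bernoulli_kl_shift_le_at_lower_endpoint: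
  fixes th e u :: real
  assumes "0 < th" "th < 1" "0 \<le> e" "e^2 \<le> 25/128"
    and "0 \<le> u" "(1 + e) * u^2 = 8/25 * (th * (1 - th))^2 * e^2"
  shows "bernoulli_kl th (th - u) \<le> 4/25 * (th * (1 - th)) * e^2"
proof -
  define c where "c = th * (1 - th)"
  have c: "0 < c"
    using assms unfolding c_def by simp
  have "u^2 \<le> (1 + e) * u^2"
    using assms(3) by (simp add: algebra_simps)
  then have u_sq: "u^2 \<le> 8/25 * c^2 * e^2"
    using assms(6) unfolding c_def by simp
  have "8/25 * c^2 * e^2 \<le> 8/25 * c^2 * (25/128)"
    using assms(4) by (intro mult_left_mono) auto
  also have "\<dots> = (c / 4)^2"
    by (simp add: power_divide)
  finally have "u^2 \<le> (c / 4)^2"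
    using u_sq by linarith
  then have u_quarter: "u \<le> c / 4"
    by (rule power2_le_imp_le) (use c in simp)
  have "8/25 * c^2 * e^2 \<le> 81/64 * (c * e)^2"
    by (simp add: power_mult_distrib)
  also have "\<dots> = (9/8 * e * c)^2"
    by (simp add: power2_eq_square algebra_simps)
  finally have "u^2 \<le> (9/8 * e * c)^2"
    using u_sq by linarith
  then have "u \<le> 9/8 * e * c"
    by (rule power2_le_imp_le) (use c assms(3) in simp)
  then have "bernoulli_kl th (th - u) \<le> (1 + e) * u^2 / (2 * c)"
    using bernoulli_kl_shift_le_quadratic[OF assms(1,2,5)] u_quarter unfolding c_def by simp
  also have "\<dots> = 4/25 * c * e^2"
    using c unfolding assms(6) c_def[symmetric] by (simp add: power2_eq_square)
  finally show ?thesis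
    unfolding c_def .
qed

lemma bernoulli_kl_shift_ge_at_upper_endpoint:
  fixes th e u :: real
  assumes "0 < th" "th < 1" "0 \<le> e" "e < 1/2"
    and "0 \<le> u" "(1 - e) * u^2 = 8/25 * (th * (1 - th))^2 * e^2"
  shows "u < th * (1 - th)" "4/25 * (th * (1 - th)) * e^2 \<le> bernoulli_kl th (th - u)"
proof -
  define c where "c = th * (1 - th)"
  have c: "0 < c"
    using assms unfolding c_def by simp
  have "u^2 \<le> 2 * ((1 - e) * u^2)"
    using mult_right_mono[of "2 * e" 1 "u^2"] assms(4) by (simp add: algebra_simps)
  also have "\<dots> = (4/5 * e * c)^2"
    unfolding assms(6) c_def[symmetric] by (simp add: power2_eq_square algebra_simps)
  finally have "u \<le> 4/5 * e * c"
    by (rule power2_le_imp_le) (use c assms(3) in simp)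
  moreover have "4/5 * e * c < 1 * c"
    using assms(4) c by (intro mult_strict_right_mono) auto
  ultimately show u_c: "u < th * (1 - th)"
    unfolding c_def by linarith
  have "4/25 * c * e^2 = (1 - e) * u^2 / (2 * c)"
    using c unfolding assms(6) c_def[symmetric] by (simp add: power2_eq_square)
  also have "\<dots> \<le> bernoulli_kl th (th - u)"
    using bernoulli_kl_shift_ge_quadratic[OF assms(1,2,5) u_c] \<open>u \<le> 4/5 * e * c\<close>
    unfolding c_def by simp
  finally show "4/25 * (th * (1 - th)) * e^2 \<le> bernoulli_kl th (th - u)"
    unfolding c_def .
qed

lemma bernoulli_kl_shift_root:
  fixes th e ul uu :: real
  assumes "0 < th" "th < 1" "0 \<le> e" "e^2 \<le> 25/128"
    and "0 \<le> ul" "(1 + e) * ul^2 = 8/25 * (th * (1 - th))^2 * e^2"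
    and "0 \<le> uu" "(1 - e) * uu^2 = 8/25 * (th * (1 - th))^2 * e^2"
  shows "\<exists>u. ul \<le> u \<and> u \<le> uu \<and> u < th \<and> bernoulli_kl th (th - u) = 4/25 * (th * (1 - th)) * e^2"
proof -
  have "e < 1/2"
    using assms(4) by (rule sq_le_imp_less_half)
  note upper = bernoulli_kl_shift_ge_at_upper_endpoint[OF assms(1-3) this assms(7,8)]
  have "th * (1 - th) \<le> th"
    using assms(1,2) by (simp add: mult_le_cancel_left1)
  then have "uu < th"
    using upper(1) by linarith
  have "ul^2 \<le> (1 + e) * ul^2" "(1 - e) * uu^2 \<le> uu^2"
    using assms(3) by (simp_all add: algebra_simps)
  then have "ul^2 \<le> uu^2"
    using assms(6,8) by linarith
  then have "ul \<le> uu"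
    using assms(7) by (rule power2_le_imp_le)
  moreover have "continuous_on {ul..uu} (\<lambda>u. bernoulli_kl th (th - u))"
    unfolding bernoulli_kl_def using \<open>uu < th\<close> assms(2,5) by (intro continuous_intros) auto
  ultimately obtain u where "ul \<le> u" "u \<le> uu" "bernoulli_kl th (th - u) = 4/25 * (th * (1 - th)) * e^2"
    using IVT'[of "\<lambda>u. bernoulli_kl th (th - u)"]
      bernoulli_kl_shift_le_at_lower_endpoint[OF assms(1-6)] upper(2) by blast
  then show ?thesis
    using \<open>uu < th\<close> by (intro exI[of _ u]) auto
qed

lemma sqrt_mult_powr_minus_half_sq:
  fixes x y :: real
  assumes "0 < x" "0 \<le> y"
  shows "x * (sqrt y * x powr (-1/2))^2 = y"
proof -
  have "(x powr (-1/2))^2 = x powr (-1)"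
    using assms by (simp add: power2_eq_square flip: powr_add)
  then show ?thesis
    using assms by (simp add: powr_minus field_simps)
qed

lemma gamma_width_sq:
  fixes n :: nat and th A :: real
  assumes "n \<ge> 1" "0 < th" "th < 1" "0 \<le> A" "A \<le> real n * th^2 * (1 - th)^2 / 8"
  defines "eps \<equiv> 5/2 * sqrt A / sqrt (real n * th * (1 - th))"
  shows "eps^2 = 25/4 * (A / (real n * (th * (1 - th))))" "eps^2 \<le> 25/128"
proof -
  define c where "c = th * (1 - th)"
  have n: "0 < real n"
    using assms(1) by simp
  have "0 \<le> (th - 1/2)^2"
    by simp
  then have c: "0 < c" "c \<le> 1/4"
    using assms(2,3) unfolding c_def by (auto simp: algebra_simps power2_eq_square)
  show eps: "eps^2 = 25/4 * (A / (real n * c))"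
    using assms(4) n c unfolding eps_def c_def by (auto simp: power_divide power_mult_distrib mult.assoc)
  have "A \<le> real n * c^2 / 8"
    using assms(5) unfolding c_def by (simp add: power_mult_distrib)
  then have "A / (real n * c) \<le> c / 8"
    using n c by (simp add: field_simps power2_eq_square)
  then show "eps^2 \<le> 25/128"
    using c(2) unfolding eps by linarith
qed

lemma exists_gamma_bernoulli_kl_eq:
  fixes n :: nat and th A :: real
  assumes "n \<ge> 1" "0 < th" "th < 1" "0 < A" "A \<le> real n * th^2 * (1 - th)^2 / 8"
  defines "eps \<equiv> 5/2 * sqrt A / sqrt (real n * th * (1 - th))"
  shows "\<exists>g. sqrt (2 * A) * (1 + eps) powr (-1/2) \<le> g \<and> g \<le> sqrt (2 * A) * (1 - eps) powr (-1/2)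
           \<and> 0 < g \<and> 0 < phi n g th \<and> real n * bernoulli_kl th (phi n g th) = A"
proof -
  define c where "c = th * (1 - th)"
  define s where "s = sigma_hat n th"
  have n: "0 < real n"
    using assms(1) by simp
  have c: "0 < c"
    using assms(2,3) unfolding c_def by simp
  have s: "0 < s" "s^2 = c / real n"
    using assms(2,3) n unfolding s_def c_def sigma_hat_def by auto
  have eps_nonneg: "0 \<le> eps"
    unfolding eps_def using assms(2-4) by (intro divide_nonneg_nonneg mult_nonneg_nonneg) auto
  note eps = gamma_width_sq[OF assms(1-3) less_imp_le[OF assms(4)] assms(5), folded eps_def c_def]
  from eps(2) have "eps < 1/2"
    by (rule sq_le_imp_less_half)
  then have "0 < 1 + eps" "0 < 1 - eps"
    using eps_nonneg by simp_all
  have endpoints: "x * (s * (sqrt (2 * A) * x powr (-1/2)))^2 = 8/25 * c^2 * eps^2"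
    if "0 < x" for x
  proof -
    have "x * (s * (sqrt (2 * A) * x powr (-1/2)))^2 = s^2 * (x * (sqrt (2 * A) * x powr (-1/2))^2)"
      by (simp add: power_mult_distrib)
    also have "\<dots> = c / real n * (2 * A)"
      using sqrt_mult_powr_minus_half_sq[OF that] assms(4) s(2) by simp
    also have "\<dots> = 8/25 * c^2 * eps^2"
      using n c unfolding eps(1) by (simp add: field_simps power2_eq_square)
    finally show ?thesis .
  qed
  define gl where "gl = sqrt (2 * A) * (1 + eps) powr (-1/2)"
  define gu where "gu = sqrt (2 * A) * (1 - eps) powr (-1/2)"
  have "\<exists>u. s * gl \<le> u \<and> u \<le> s * gu \<and> u < th \<and> bernoulli_kl th (th - u) = 4/25 * c * eps^2"
    unfolding c_def gl_def gu_def
    using s(1) assms(4) endpoints[OF \<open>0 < 1 + eps\<close>] endpoints[OF \<open>0 < 1 - eps\<close>]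
    by (intro bernoulli_kl_shift_root[OF assms(2,3) eps_nonneg eps(2)]) (simp_all add: c_def)
  then obtain u where u: "s * gl \<le> u" "u \<le> s * gu" "u < th" "bernoulli_kl th (th - u) = 4/25 * c * eps^2"
    by blast
  show ?thesis
  proof (intro exI conjI)
    show "sqrt (2 * A) * (1 + eps) powr (-1/2) \<le> u / s" "u / s \<le> sqrt (2 * A) * (1 - eps) powr (-1/2)"
      using u(1,2) s(1) unfolding gl_def gu_def by (simp_all add: field_simps)
    have "0 < gl"
      using assms(4) \<open>0 < 1 + eps\<close> unfolding gl_def by simp
    then have "0 < u"
      using u(1) mult_pos_pos[OF s(1)] by fastforce
    then show "0 < u / s"
      using s(1) by simp
    have phi_eq: "phi n (u / s) th = th - u"
      using s(1) unfolding phi_def s_def by simp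
    show "0 < phi n (u / s) th"
      using u(3) unfolding phi_eq by simp
    show "real n * bernoulli_kl th (phi n (u / s) th) = A"
      using n c unfolding phi_eq u(4) eps(1) by (simp add: field_simps)
  qed
qed

section \<open>The binomial weight at the mean\<close>

lemma Bernstein_Suc:
  fixes x :: real
  assumes "j < n"
  shows "Bernstein n (Suc j) x * (real j + 1) * (1 - x) = Bernstein n j x * (real n - real j) * x"
proof -
  have choose: "real (n - j) * real (n choose j) = (real j + 1) * real (n choose Suc j)"
    using binomial_absorb_comp[of n j] binomial_absorption[of j n]
    by (metis of_nat_Suc of_nat_mult add.commute)
  have "n - j = Suc (n - Suc j)"
    using assms by simp
  then have "Bernstein n (Suc j) x * (real j + 1) * (1 - x)
      = (real j + 1) * real (n choose Suc j) * x ^ Suc j * (1 - x) ^ (n - j)"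
    unfolding Bernstein_def by simp
  also have "\<dots> = real (n - j) * real (n choose j) * x ^ Suc j * (1 - x) ^ (n - j)"
    using choose by simp
  also have "\<dots> = Bernstein n j x * (real n - real j) * x"
    unfolding Bernstein_def using assms by (simp add: of_nat_diff)
  finally show ?thesis .
qed

lemma Bernstein_mono_below_mean:
  fixes x :: real
  assumes "0 < x" "x < 1" "real k = real n * x" "j < k"
  shows "Bernstein n j x \<le> Bernstein n (Suc j) x"
proof -
  have "real j + 1 \<le> real n * x"
    using assms(3,4) by linarith
  moreover have "real n * x \<le> real n"
    using assms(2) by (simp add: mult_left_le)
  ultimately have "j < n"
    by linarith
  have "(real j + 1) * (1 - x) \<le> (real n - real j) * x"
    using \<open>real j + 1 \<le> real n * x\<close> assms(1) by (simp add: algebra_simps)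
  then have "Bernstein n j x * ((real j + 1) * (1 - x)) \<le> Bernstein n j x * ((real n - real j) * x)"
    using assms(1,2) by (intro mult_left_mono Bernstein_nonneg) auto
  also have "\<dots> = Bernstein n (Suc j) x * ((real j + 1) * (1 - x))"
    using Bernstein_Suc[OF \<open>j < n\<close>, of x] by (simp add: algebra_simps)
  finally show ?thesis
    using assms(2) by (simp add: mult_le_cancel_right)
qed

lemma Bernstein_antimono_above_mean:
  fixes x :: real
  assumes "0 < x" "x < 1" "real k = real n * x" "k \<le> j" "j < n"
  shows "Bernstein n (Suc j) x \<le> Bernstein n j x"
proof -
  have "real n * x \<le> real j"
    using assms(3,4) by simp
  then have "(real n - real j) * x \<le> (real j + 1) * (1 - x)"
    using assms(1,2) by (simp add: algebra_simps)
  then have "Bernstein n j x * ((real n - real j) * x) \<le> Bernstein n j x * ((real j + 1) * (1 - x))"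
    using assms(1,2) by (intro mult_left_mono Bernstein_nonneg) auto
  also have "Bernstein n j x * ((real n - real j) * x) = Bernstein n (Suc j) x * ((real j + 1) * (1 - x))"
    using Bernstein_Suc[OF assms(5), of x] by (simp add: algebra_simps)
  finally show ?thesis
    using assms(2) by (simp add: mult_le_cancel_right)
qed

lemma Bernstein_le_at_mean:
  fixes x :: real
  assumes "0 < x" "x < 1" "real k = real n * x" "j \<le> n"
  shows "Bernstein n j x \<le> Bernstein n k x"
proof (cases "j \<le> k")
  case True
  then show ?thesis
  proof (induction j rule: inc_induct)
    case (step m)
    then show ?case
      using Bernstein_mono_below_mean[OF assms(1-3), of m] by simp
  qed simp
next
  case False
  then have "k \<le> j"
    by simp
  then show ?thesis
    using assms(4)
  proof (induction j rule: dec_induct)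
    case (step m)
    then show ?case
      using Bernstein_antimono_above_mean[OF assms(1-3), of m] by simp
  qed simp
qed

lemma Bernstein_at_mean_ge:
  fixes x :: real
  assumes "0 < x" "x < 1" "real k = real n * x"
  shows "1 \<le> (real n + 1) * Bernstein n k x"
proof -
  have "1 = (\<Sum>j\<le>n. Bernstein n j x)"
    by simp
  also have "\<dots> \<le> (\<Sum>j\<le>n. Bernstein n k x)"
    using assms by (intro sum_mono Bernstein_le_at_mean) auto
  also have "\<dots> = (real n + 1) * Bernstein n k x"
    by simp
  finally show ?thesis .
qed

section \<open>The PBR likelihood\<close>

lemma real_cnt:
  assumes "real n * t \<in> \<int>" "0 \<le> t"
  shows "real (cnt n t) = real n * t"
proof -
  obtain z :: int where z: "real n * t = of_int z"
    using assms(1) by (elim Ints_cases)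
  then have "0 \<le> z"
    using assms(2) by (metis of_int_0_le_iff mult_nonneg_nonneg of_nat_0_le_iff)
  then show ?thesis
    unfolding cnt_def z by simp
qed

lemma P_PBR_self: "P_PBR n th th = (real n + 1) * Bernstein n (cnt n th) th"
  unfolding P_PBR_def Bernstein_def by simp

lemma cnt_le:
  assumes "real (cnt n t) = real n * t" "t \<le> 1"
  shows "cnt n t \<le> n" "real (n - cnt n t) = real n * (1 - t)"
proof -
  have "real n * t \<le> real n"
    using assms(2) by (simp add: mult_left_le)
  then show "cnt n t \<le> n"
    using assms(1) by simp
  then show "real (n - cnt n t) = real n * (1 - t)"
    using assms(1) by (simp add: of_nat_diff algebra_simps)
qed

lemma ln_P_PBR_of_le:
  assumes "0 < q" "q < 1" "q \<le> th" "cnt n th \<le> n"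
  shows "ln (P_PBR n th q) = real (cnt n th) * ln q + real (n - cnt n th) * ln (1 - q)
           + ln (real n + 1) + ln (real (n choose cnt n th))"
  unfolding P_PBR_def using assms by (simp add: ln_mult ln_realpow)

lemma ln_P_PBR_self:
  assumes "0 < th" "th < 1" "real (cnt n th) = real n * th"
  shows "ln (P_PBR n th th) = ln (real n + 1) / 2 - H n th"
proof -
  note cnt = cnt_le[OF assms(3) less_imp_le[OF assms(2)]]
  show ?thesis
    using ln_P_PBR_of_le[OF assms(1,2) order_refl cnt(1)] assms(3) cnt(2)
    unfolding H_def by (simp add: algebra_simps)
qed

lemma ln_P_PBR_eq_self_minus_kl:
  assumes "0 < th" "th < 1" "real (cnt n th) = real n * th" "0 < q" "q \<le> th"
  shows "ln (P_PBR n th q) = ln (P_PBR n th th) - real n * bernoulli_kl th q"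
proof -
  note cnt = cnt_le[OF assms(3) less_imp_le[OF assms(2)]]
  have "q < 1"
    using assms(2,5) by linarith
  then show ?thesis
    using ln_P_PBR_of_le[OF assms(4) _ assms(5) cnt(1)] ln_P_PBR_of_le[OF assms(1,2) order_refl cnt(1)]
      assms(3) cnt(2) unfolding bernoulli_kl_def by (simp add: algebra_simps)
qed

theorem mainTheorem12:
  fixes n :: nat and th alpha :: real
  assumes "n \<ge> 1" and "0 < th" and "th < 1" and "real n * th \<in> \<int>" and "alpha > 0"
    and "alpha + (ln (real n + 1) / 2 - H n th) \<le> real n * th\<^sup>2 * (1 - th)\<^sup>2 / 8"
  shows "\<exists>g > 0. - ln (P_PBR n th (phi n g th)) = alpha \<and>
     (let D = ln (real n + 1) / 2 - H n th;
          eps = 5 / 2 * sqrt (alpha + D) / sqrt (real n * th * (1 - th))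
      in sqrt (2 * (alpha + D)) * (1 + eps) powr (-1/2) \<le> g \<and>
         g \<le> sqrt (2 * (alpha + D)) * (1 - eps) powr (-1/2))"
proof -
  have cnt: "real (cnt n th) = real n * th"
    using assms(2,4) by (intro real_cnt) auto
  define D where "D = ln (real n + 1) / 2 - H n th"
  have "1 \<le> P_PBR n th th"
    unfolding P_PBR_self using Bernstein_at_mean_ge[OF assms(2,3) cnt] .
  then have "0 \<le> D"
    unfolding D_def ln_P_PBR_self[OF assms(2,3) cnt, symmetric] by simp
  then have "0 < alpha + D"
    using assms(5) by linarith
  then obtain g where g: "sqrt (2 * (alpha + D)) * (1 + 5/2 * sqrt (alpha + D) / sqrt (real n * th * (1 - th))) powr (-1/2) \<le> g"
      "g \<le> sqrt (2 * (alpha + D)) * (1 - 5/2 * sqrt (alpha + D) / sqrt (real n * th * (1 - th))) powr (-1/2)"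
      "0 < g" "0 < phi n g th" "real n * bernoulli_kl th (phi n g th) = alpha + D"
    using exists_gamma_bernoulli_kl_eq[OF assms(1-3) _ assms(6)[folded D_def]] by blast
  moreover have "- ln (P_PBR n th (phi n g th)) = alpha"
  proof -
    have "phi n g th \<le> th"
      using g(3) assms(2,3) unfolding phi_def sigma_hat_def by simp
    then show ?thesis
      using ln_P_PBR_eq_self_minus_kl[OF assms(2,3) cnt g(4)] g(5)
      unfolding ln_P_PBR_self[OF assms(2,3) cnt] D_def by simp
  qed
  ultimately show ?thesis
    unfolding Let_def D_def[symmetric] by blast
qed

end
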